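(* Let the sequence $r$ on positive integers be defined by $r(1)=0$, $r(k)=\frac{3k}{2}+r(\frac{k}{2})$ if $k$ is even, and $r(k)=2+\frac{3(k-1)}{2}+r(\frac{k+1}{2})$ if $k\neq1$ is odd. Then $r$ is strictly increasing. *)

theory Defs
  imports Main
begin

(* The sequence r on positive integers; r 0 is an arbitrary junk value (0) outside the domain.
   All divisions are exact on the respective branches (k even, resp. k-1 even, k+1 even). *)
function r :: "nat \<Rightarrow> nat" where
  "r k = (if k \<le> 1 then 0
          else if even k then 3 * k div 2 + r (k div 2)
          else 2 + 3 * (k - 1) div 2 + r ((k + 1) div 2))"
  by auto
termination
  by (relation "measure id") (auto elim!: oddE)

end

theory Submission
  imports Defs
begin

(* For m \<ge> 1 the recursion gives r(2m+2) - r(2m+1) = 1 and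
   r(2m+1) - r(2m) = 2 + (r(m+1) - r(m)), so every consecutive difference is positive
   by strong induction, starting from r 2 - r 1 = 3. *)

declare r.simps [simp del]

lemma r_one: "r 1 = 0"
  by (subst r.simps) simp

lemma r_double: "m \<ge> 1 \<Longrightarrow> r (2 * m) = 3 * m + r m"
  by (subst r.simps) simp

lemma r_double_Suc: "m \<ge> 1 \<Longrightarrow> r (Suc (2 * m)) = 2 + 3 * m + r (Suc m)"
  by (subst r.simps) simp

lemma r_less_Suc: "k \<ge> 1 \<Longrightarrow> r k < r (Suc k)"
proof (induction k rule: less_induct)
  case (less k)
  consider "k = 1" | m where "k = 2 * m" "m \<ge> 1" | m where "k = Suc (2 * m)" "m \<ge> 1"
    using less.prems by (cases "k = 1"; cases "even k") (auto elim!: evenE oddE)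
  then show ?case
  proof cases
    case 1
    then show ?thesis
      using r_double[of 1] r_one by (simp add: numeral_2_eq_2)
  next
    case (2 m)
    then have "r m < r (Suc m)"
      using less.IH by simp
    then show ?thesis
      using 2 r_double r_double_Suc by simp
  next
    case (3 m)
    have "Suc (Suc (2 * m)) = 2 * Suc m" by simp
    then show ?thesis
      using 3 r_double[of "Suc m"] r_double_Suc[of m] by simp
  qed
qed

theorem lemma5:
  shows "strict_mono_on {1..} r"
proof (rule strict_mono_onI)
  fix a b :: nat
  assume "a \<in> {1..}" and "a < b"
  then show "r a < r b"
    by (auto intro: lift_Suc_mono_less_ivl[of "{1..}"] r_less_Suc)
qed

end
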